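(* Let $k\ge 1$ and let $G$ be a graph with minimum degree at least $k$ and maximum degree $\Delta(G)$. Let $\Omega$ be a total $k$-coalition partition of $G$ of maximum cardinality $\mathrm{TC}_k(G)$. Then every $A\in\Omega$ forms a total $k$-coalition with at most $\Delta(G)-k+1$ sets in $\Omega$.
   Context: All graphs are finite, simple and connected. $N(v)$ denotes the open neighborhood of $v$. For a graph $G$ with $\delta(G)\ge k$, a set $S\subseteq V(G)$ is a total $k$-dominating set if $|N(v)\cap S|\ge k$ for every $v\in V(G)$. Two disjoint sets $U,W\subseteq V(G)$ form a total $k$-coalition if neither is a total $k$-dominating set but $U\cup W$ is. A total $k$-coalition partition of $G$ is a partition $\Omega$ of $V(G)$ in which every set forms a total $k$-coalition with some other set of $\Omega$; $\mathrm{TC}_k(G)$ is the maximum cardinality of such a partition. *)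

theory Defs
  imports Main "HOL-Library.Disjoint_Sets"
begin

definition graph :: "'a set \<Rightarrow> ('a \<Rightarrow> 'a \<Rightarrow> bool) \<Rightarrow> bool" where
  "graph V E \<longleftrightarrow> finite V \<and> V \<noteq> {} \<and>
     (\<forall>x y. E x y \<longrightarrow> x \<in> V \<and> y \<in> V) \<and>
     (\<forall>x y. E x y \<longrightarrow> E y x) \<and> (\<forall>x. \<not> E x x) \<and>
     (\<forall>u\<in>V. \<forall>v\<in>V. E\<^sup>*\<^sup>* u v)"

definition nbhd :: "'a set \<Rightarrow> ('a \<Rightarrow> 'a \<Rightarrow> bool) \<Rightarrow> 'a \<Rightarrow> 'a set" where
  "nbhd V E v = {u \<in> V. E v u}"

definition degree :: "'a set \<Rightarrow> ('a \<Rightarrow> 'a \<Rightarrow> bool) \<Rightarrow> 'a \<Rightarrow> nat" where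
  "degree V E v = card (nbhd V E v)"

definition min_degree :: "'a set \<Rightarrow> ('a \<Rightarrow> 'a \<Rightarrow> bool) \<Rightarrow> nat" where
  "min_degree V E = Min (degree V E ` V)"

definition max_degree :: "'a set \<Rightarrow> ('a \<Rightarrow> 'a \<Rightarrow> bool) \<Rightarrow> nat" where
  "max_degree V E = Max (degree V E ` V)"

definition total_k_dominating :: "'a set \<Rightarrow> ('a \<Rightarrow> 'a \<Rightarrow> bool) \<Rightarrow> nat \<Rightarrow> 'a set \<Rightarrow> bool" where
  "total_k_dominating V E k S \<longleftrightarrow> S \<subseteq> V \<and> (\<forall>v\<in>V. card (nbhd V E v \<inter> S) \<ge> k)"

definition total_k_coalition :: "'a set \<Rightarrow> ('a \<Rightarrow> 'a \<Rightarrow> bool) \<Rightarrow> nat \<Rightarrow> 'a set \<Rightarrow> 'a set \<Rightarrow> bool" where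
  "total_k_coalition V E k U W \<longleftrightarrow> U \<subseteq> V \<and> W \<subseteq> V \<and> U \<inter> W = {} \<and>
     \<not> total_k_dominating V E k U \<and> \<not> total_k_dominating V E k W \<and>
     total_k_dominating V E k (U \<union> W)"

definition total_k_coalition_partition :: "'a set \<Rightarrow> ('a \<Rightarrow> 'a \<Rightarrow> bool) \<Rightarrow> nat \<Rightarrow> 'a set set \<Rightarrow> bool" where
  "total_k_coalition_partition V E k P \<longleftrightarrow> partition_on V P \<and>
     (\<forall>A\<in>P. \<exists>B\<in>P. B \<noteq> A \<and> total_k_coalition V E k A B)"

definition TC :: "'a set \<Rightarrow> ('a \<Rightarrow> 'a \<Rightarrow> bool) \<Rightarrow> nat \<Rightarrow> nat" where
  "TC V E k = Max {card P | P. total_k_coalition_partition V E k P}"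

end

theory Submission
  imports Defs
begin

text \<open>
  Let \<open>A\<close> have at least one total \<open>k\<close>-coalition partner. Then \<open>A\<close> is not total \<open>k\<close>-dominating,
  so some vertex \<open>v\<close> has only \<open>a < k\<close> neighbours in \<open>A\<close>, and every partner of \<open>A\<close> must
  contain at least \<open>k - a \<ge> 1\<close> further neighbours of \<open>v\<close>. The partners are pairwise disjoint
  and disjoint from \<open>A\<close>, so \<open>c\<close> partners give \<open>a + c (k - a) \<le> deg v \<le> \<Delta>\<close>, whence
  \<open>c \<le> \<Delta> - k + 1\<close>.
\<close>

lemma le_diff_add_1_if_mult_add_le:
  fixes a c k D :: nat
  assumes "a < k" and "c * (k - a) + a \<le> D"
  shows "c \<le> D - k + 1"
proof (cases c)
  case (Suc c')
  obtain t where t: "k - a = Suc t"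
    using \<open>a < k\<close> by (metis Suc_diff_Suc)
  have "c * (k - a) = c' * t + c' + t + 1"
    using Suc t by (simp add: algebra_simps)
  with assms Suc t show ?thesis
    by linarith
qed simp

lemma sum_card_Int_disjoint_le:
  assumes "finite N" and "finite F" and "disjoint F"
  shows "(\<Sum>B\<in>F. card (N \<inter> B)) \<le> card N"
proof -
  have "(\<Sum>B\<in>F. card (N \<inter> B)) = card (\<Union>B\<in>F. N \<inter> B)"
    using assms by (intro card_UN_disjoint [symmetric]) (auto simp: disjoint_def)
  also have "\<dots> \<le> card N"
    using \<open>finite N\<close> by (intro card_mono) auto
  finally show ?thesis .
qed

lemma degree_le_max_degree:
  assumes "finite V" and "v \<in> V"
  shows "degree V E v \<le> max_degree V E"
  using assms unfolding max_degree_def by simp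

lemma total_k_coalition_irrefl: "\<not> total_k_coalition V E k A A"
  unfolding total_k_coalition_def by simp

lemma total_k_coalition_card_nbhd_Int:
  assumes "finite V" and "total_k_coalition V E k A B" and "v \<in> V"
  shows "k \<le> card (nbhd V E v \<inter> A) + card (nbhd V E v \<inter> B)"
proof -
  have "finite (nbhd V E v)"
    using \<open>finite V\<close> unfolding nbhd_def by simp
  moreover have "A \<inter> B = {}" and "k \<le> card (nbhd V E v \<inter> (A \<union> B))"
    using assms(2,3) unfolding total_k_coalition_def total_k_dominating_def by auto
  ultimately show ?thesis
    by (simp add: Int_Un_distrib card_Un_disjoint disjoint_iff)
qed

lemma card_total_k_coalition_partners_le:
  assumes "finite V" and "disjoint P"
  shows "card {B \<in> P. total_k_coalition V E k A B} \<le> max_degree V E - k + 1"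
    (is "card ?C \<le> _")
proof (cases "card ?C = 0")
  case False
  then have "finite ?C" and "?C \<noteq> {}"
    by (simp_all add: card_eq_0_iff)
  then obtain B0 where "total_k_coalition V E k A B0"
    by auto
  then obtain v where "v \<in> V" and few: "card (nbhd V E v \<inter> A) < k"
    unfolding total_k_coalition_def total_k_dominating_def by auto
  define N where "N = nbhd V E v"
  define a where "a = card (N \<inter> A)"
  have "finite N"
    using \<open>finite V\<close> unfolding N_def nbhd_def by simp
  have partner_share: "k - a \<le> card (N \<inter> B)" if "B \<in> ?C" for B
    using total_k_coalition_card_nbhd_Int [OF \<open>finite V\<close> _ \<open>v \<in> V\<close>] that
    unfolding N_def a_def by fastforce
  have "A \<notin> ?C"
    using total_k_coalition_irrefl by blast
  have "disjoint (insert A ?C)"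
    using \<open>disjoint P\<close> unfolding disjoint_def total_k_coalition_def by blast
  have "card ?C * (k - a) + a \<le> (\<Sum>B\<in>?C. card (N \<inter> B)) + card (N \<inter> A)"
    using sum_mono [of ?C "\<lambda>_. k - a", OF partner_share] unfolding a_def by simp
  also have "\<dots> = (\<Sum>B\<in>insert A ?C. card (N \<inter> B))"
    using \<open>finite ?C\<close> \<open>A \<notin> ?C\<close> by simp
  also have "\<dots> \<le> card N"
    using \<open>finite N\<close> \<open>finite ?C\<close> \<open>disjoint (insert A ?C)\<close> by (intro sum_card_Int_disjoint_le) auto
  also have "\<dots> \<le> max_degree V E"
    using degree_le_max_degree [OF \<open>finite V\<close> \<open>v \<in> V\<close>] unfolding N_def degree_def .
  finally show ?thesis
    using few le_diff_add_1_if_mult_add_le unfolding N_def a_def by blast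
qed simp

theorem lemma3p3:
  fixes V :: "'a set" and E :: "'a \<Rightarrow> 'a \<Rightarrow> bool" and k :: nat and P :: "'a set set"
  assumes "graph V E"
    and "k \<ge> 1"
    and "min_degree V E \<ge> k"
    and "total_k_coalition_partition V E k P"
    and "card P = TC V E k"
  shows "\<forall>A\<in>P. card {B \<in> P. total_k_coalition V E k A B} \<le> max_degree V E - k + 1"
proof -
  have "finite V"
    using \<open>graph V E\<close> unfolding graph_def by simp
  moreover have "disjoint P"
    using \<open>total_k_coalition_partition V E k P\<close>
    unfolding total_k_coalition_partition_def partition_on_def by simp
  ultimately show ?thesis
    using card_total_k_coalition_partners_le by blast
qed

end
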